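(* Assume the payoffs are normalized with $T=1$, $S=0$. Let $\mathbf p=(p_1,p_2,p_3,p_4)$ be a firm memory-one strategy for X. Then $\mathbf p$ is strictly firm if and only if $$p_3<\frac{P}{R-P}(1-p_1)\qquad\text{and}\qquad p_3<\frac{P}{1-P}(1-p_2).$$ Moreover, if the X Press-Dyson vector of $\mathbf p$ is $\mathbf p-(1,1,0,0)=\alpha\mathbf S_X+\beta\mathbf S_Y+\gamma\mathbf 1+\delta\mathbf e_{23}$, then $\mathbf p$ is strictly firm if and only if $-\delta>\max(\alpha,(1-2P)\alpha)$.
   Context: Iterated Prisoner's Dilemma with normalized payoffs $T=1>R>P>S=0$, $2R>1$; outcomes ordered $cc,cd,dc,dd$ (first letter X's play, second Y's; $c$ = cooperate, $d$ = defect); payoff vectors $\mathbf S_X=(R,0,1,P)$, $\mathbf S_Y=(R,1,0,P)$, $\mathbf 1=(1,1,1,1)$, $\mathbf e_{23}=(0,1,1,0)$. A memory-one strategy for X is $\mathbf p\in[0,1]^4$, $p_i$ the probability X plays $c$ after the $i$-th outcome; it is firm if $p_4=0$. A strategy pattern for Y is any (possibly randomized, history-dependent) rule for Y's play. With $\mathbf v^n$ the distribution of the outcome of round $n$, a limit distribution is any limit point $\mathbf v=(v_1,\dots,v_4)$ of the Cesàro averages $\frac1n\sum_{k\le n}\mathbf v^k$, with $s_X=\langle\mathbf v\cdot\mathbf S_X\rangle$, $s_Y=\langle\mathbf v\cdot\mathbf S_Y\rangle$. $\mathbf p$ is strictly firm if it is firm and, for every strategy pattern of Y and every associated limit distribution,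 $s_Y\ge P$ implies $v_4=1$ (and so $s_Y=s_X=P$). *)

theory Defs
  imports Complex_Main
begin

text \<open>Outcomes of a single round, ordered cc, cd, dc, dd (X's play first).\<close>
datatype outcome = CC | CD | DC | DD

text \<open>Payoff vectors with normalized payoffs T = 1, S = 0.\<close>
definition S_X :: "real \<Rightarrow> real \<Rightarrow> outcome \<Rightarrow> real" where
  "S_X R P w = (case w of CC \<Rightarrow> R | CD \<Rightarrow> 0 | DC \<Rightarrow> 1 | DD \<Rightarrow> P)"

definition S_Y :: "real \<Rightarrow> real \<Rightarrow> outcome \<Rightarrow> real" where
  "S_Y R P w = (case w of CC \<Rightarrow> R | CD \<Rightarrow> 1 | DC \<Rightarrow> 0 | DD \<Rightarrow> P)"

definition e23 :: "outcome \<Rightarrow> real" where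
  "e23 w = (case w of CC \<Rightarrow> 0 | CD \<Rightarrow> 1 | DC \<Rightarrow> 1 | DD \<Rightarrow> 0)"

definition e12 :: "outcome \<Rightarrow> real" where
  "e12 w = (case w of CC \<Rightarrow> 1 | CD \<Rightarrow> 1 | DC \<Rightarrow> 0 | DD \<Rightarrow> 0)"

text \<open>A memory-one strategy for X: probability of cooperating after each outcome.\<close>
definition memory_one :: "(outcome \<Rightarrow> real) \<Rightarrow> bool" where
  "memory_one p \<longleftrightarrow> (\<forall>w. 0 \<le> p w \<and> p w \<le> 1)"

definition firm :: "(outcome \<Rightarrow> real) \<Rightarrow> bool" where
  "firm p \<longleftrightarrow> p DD = 0"

text \<open>A strategy pattern for Y (behavioural form): given the history of outcomes so far,
  the probability that Y cooperates in the next round.\<close>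
definition strategy_pattern :: "(outcome list \<Rightarrow> real) \<Rightarrow> bool" where
  "strategy_pattern q \<longleftrightarrow> (\<forall>h. 0 \<le> q h \<and> q h \<le> 1)"

definition outcome_prob :: "real \<Rightarrow> real \<Rightarrow> outcome \<Rightarrow> real" where
  "outcome_prob x y w = (case w of CC \<Rightarrow> x * y | CD \<Rightarrow> x * (1 - y)
                                  | DC \<Rightarrow> (1 - x) * y | DD \<Rightarrow> (1 - x) * (1 - y))"

definition x_coop :: "real \<Rightarrow> (outcome \<Rightarrow> real) \<Rightarrow> outcome list \<Rightarrow> real" where
  "x_coop x0 p h = (if h = [] then x0 else p (last h))"

lemma UNIV_outcome: "(UNIV :: outcome set) = {CC, CD, DC, DD}"
  using outcome.exhaust by auto

instance outcome :: finite
  by standard (simp add: UNIV_outcome)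

text \<open>Probability of a finite history h (chronological list of outcomes).\<close>
definition hist_prob :: "real \<Rightarrow> (outcome \<Rightarrow> real) \<Rightarrow> (outcome list \<Rightarrow> real) \<Rightarrow> outcome list \<Rightarrow> real" where
  "hist_prob x0 p q h =
     (\<Prod>k<length h. outcome_prob (x_coop x0 p (take k h)) (q (take k h)) (h ! k))"

text \<open>Distribution of the outcome of round n+1 (rounds counted from 0 here).\<close>
definition round_dist :: "real \<Rightarrow> (outcome \<Rightarrow> real) \<Rightarrow> (outcome list \<Rightarrow> real) \<Rightarrow> nat \<Rightarrow> outcome \<Rightarrow> real" where
  "round_dist x0 p q n w =
     (\<Sum>h\<in>{h :: outcome list. length h = n}.
        hist_prob x0 p q h * outcome_prob (x_coop x0 p h) (q h) w)"

definition cesaro :: "real \<Rightarrow> (outcome \<Rightarrow> real) \<Rightarrow> (outcome list \<Rightarrow> real) \<Rightarrow> nat \<Rightarrow> outcome \<Rightarrow> real" where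
  "cesaro x0 p q n w = (\<Sum>k<n. round_dist x0 p q k w) / real n"

definition limit_distribution ::
  "real \<Rightarrow> (outcome \<Rightarrow> real) \<Rightarrow> (outcome list \<Rightarrow> real) \<Rightarrow> (outcome \<Rightarrow> real) \<Rightarrow> bool" where
  "limit_distribution x0 p q v \<longleftrightarrow>
     (\<exists>r. strict_mono r \<and> (\<forall>w. (\<lambda>k. cesaro x0 p q (r k) w) \<longlonglongrightarrow> v w))"

definition payoff :: "(outcome \<Rightarrow> real) \<Rightarrow> (outcome \<Rightarrow> real) \<Rightarrow> real" where
  "payoff v S = (\<Sum>w\<in>UNIV. v w * S w)"

definition strictly_firm :: "real \<Rightarrow> real \<Rightarrow> (outcome \<Rightarrow> real) \<Rightarrow> bool" where
  "strictly_firm R P p \<longleftrightarrow> firm p \<and>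
     (\<forall>x0 q v. 0 \<le> x0 \<and> x0 \<le> 1 \<longrightarrow> strategy_pattern q \<longrightarrow> limit_distribution x0 p q v \<longrightarrow>
        payoff v (S_Y R P) \<ge> P \<longrightarrow> v DD = 1)"

end

(*
  A limit distribution v of the repeated game satisfies Akin's relation
  <v, p - e12> = 0, obtained by telescoping the Cesaro averages; when Y also plays a
  memory-one strategy q it satisfies <v, q - e13> = 0 as well.  If Y's payoff is at
  least P, then (R - P) v_cc + (1 - P) v_cd >= P v_dc, and multiplying by p_3 and
  substituting Akin's relation shows that the two strict inequalities force
  v_cc = v_cd = v_dc = 0.  Conversely, if the first inequality fails, Y always
  cooperating earns at least P without the play collapsing to dd; if the second fails,
  so does Y cooperating only after mutual defection.  When p_3 = 0 the failing
  inequality says p_1 = 1 (resp. p_2 = 1), and then cc (resp. cd) is an absorbing outcome.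
  In Press-Dyson coordinates the two inequalities read -delta > alpha and
  -delta > (1 - 2P) alpha.
*)

theory Submission
  imports Defs "HOL-Analysis.Analysis"
begin

definition e13 :: "outcome \<Rightarrow> real" where
  "e13 w = (case w of CC \<Rightarrow> 1 | CD \<Rightarrow> 0 | DC \<Rightarrow> 1 | DD \<Rightarrow> 0)"

lemma sum_UNIV_outcome: "(\<Sum>w\<in>UNIV. f w) = f CC + f CD + f DC + f DD"
  by (simp add: UNIV_outcome add.assoc)

lemma sum_outcome_prob: "(\<Sum>w\<in>UNIV. outcome_prob x y w) = 1"
  by (simp add: sum_UNIV_outcome outcome_prob_def algebra_simps)

lemma sum_outcome_prob_e12: "(\<Sum>w\<in>UNIV. outcome_prob x y w * e12 w) = x"
  by (simp add: sum_UNIV_outcome outcome_prob_def e12_def algebra_simps)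

lemma sum_outcome_prob_e13: "(\<Sum>w\<in>UNIV. outcome_prob x y w * e13 w) = y"
  by (simp add: sum_UNIV_outcome outcome_prob_def e13_def algebra_simps)

lemma outcome_prob_nonneg:
  "0 \<le> x \<Longrightarrow> x \<le> 1 \<Longrightarrow> 0 \<le> y \<Longrightarrow> y \<le> 1 \<Longrightarrow> 0 \<le> outcome_prob x y w"
  by (cases w) (simp_all add: outcome_prob_def)

lemma outcome_prob_e12_e13: "outcome_prob (e12 w) (e13 w) w = 1"
  by (cases w) (simp_all add: outcome_prob_def e12_def e13_def)

lemma payoff_S_Y: "payoff v (S_Y R P) = v CC * R + v CD + v DD * P"
  by (simp add: payoff_def S_Y_def sum_UNIV_outcome)

lemma lists_length_Suc_eq_image_snoc:
  "{h :: 'a list. length h = Suc n} = (\<lambda>(h, w). h @ [w]) ` ({h. length h = n} \<times> UNIV)"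
proof
  show "{h :: 'a list. length h = Suc n} \<subseteq> (\<lambda>(h, w). h @ [w]) ` ({h. length h = n} \<times> UNIV)"
  proof
    fix h :: "'a list" assume "h \<in> {h. length h = Suc n}"
    then have "h = butlast h @ [last h]" and "length (butlast h) = n"
      by (auto intro: append_butlast_last_id[symmetric])
    then show "h \<in> (\<lambda>(h, w). h @ [w]) ` ({h. length h = n} \<times> UNIV)"
      by (metis (mono_tags, lifting) SigmaI UNIV_I case_prod_conv image_eqI mem_Collect_eq)
  qed
qed auto

lemma sum_lists_length_Suc:
  "(\<Sum>h\<in>{h :: 'a :: finite list. length h = Suc n}. g h)
     = (\<Sum>h\<in>{h. length h = n}. \<Sum>w\<in>UNIV. g (h @ [w]))"
proof -
  have "inj_on (\<lambda>(h, w). h @ [w]) ({h :: 'a list. length h = n} \<times> UNIV)"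
    by (auto simp: inj_on_def)
  then show ?thesis
    by (simp add: lists_length_Suc_eq_image_snoc sum.reindex sum.cartesian_product split_def)
qed

lemma hist_prob_snoc:
  "hist_prob x0 p q (h @ [w]) = hist_prob x0 p q h * outcome_prob (x_coop x0 p h) (q h) w"
proof -
  have "(\<Prod>k<length h. outcome_prob (x_coop x0 p (take k (h @ [w]))) (q (take k (h @ [w])))
            ((h @ [w]) ! k))
      = (\<Prod>k<length h. outcome_prob (x_coop x0 p (take k h)) (q (take k h)) (h ! k))"
    by (rule prod.cong) (auto simp: nth_append)
  then show ?thesis by (simp add: hist_prob_def)
qed

locale game =
  fixes x0 :: real and p :: "outcome \<Rightarrow> real" and q :: "outcome list \<Rightarrow> real"
  assumes x0: "0 \<le> x0" "x0 \<le> 1" and memory_one_p: "memory_one p"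
    and strategy_pattern_q: "strategy_pattern q"
begin

abbreviation "rd \<equiv> round_dist x0 p q"
abbreviation "hp \<equiv> hist_prob x0 p q"
abbreviation "ces \<equiv> cesaro x0 p q"

lemma outcome_prob_play_nonneg: "0 \<le> outcome_prob (x_coop x0 p h) (q h) w"
  using x0 memory_one_p strategy_pattern_q
  by (intro outcome_prob_nonneg) (auto simp: x_coop_def memory_one_def strategy_pattern_def)

lemma hist_prob_nonneg: "0 \<le> hp h"
  unfolding hist_prob_def by (intro prod_nonneg ballI outcome_prob_play_nonneg)

lemma round_dist_nonneg: "0 \<le> rd n w"
  unfolding round_dist_def
  by (intro sum_nonneg mult_nonneg_nonneg hist_prob_nonneg outcome_prob_play_nonneg)

lemma round_dist_0: "rd 0 w = outcome_prob x0 (q []) w"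
proof -
  have "{h :: outcome list. length h = 0} = {[]}" by auto
  then show ?thesis by (simp add: round_dist_def hist_prob_def x_coop_def)
qed

lemma sum_round_dist_times:
  "(\<Sum>w\<in>UNIV. rd n w * f w)
     = (\<Sum>h | length h = n. hp h * (\<Sum>w\<in>UNIV. outcome_prob (x_coop x0 p h) (q h) w * f w))"
  unfolding round_dist_def
  by (simp add: sum_distrib_right sum_distrib_left mult.assoc sum.swap[where A = UNIV])

lemma sum_round_dist_times_last:
  "(\<Sum>w\<in>UNIV. rd n w * f w) = (\<Sum>h | length h = Suc n. hp h * f (last h))"
  by (simp add: sum_round_dist_times sum_lists_length_Suc hist_prob_snoc sum_distrib_left mult.assoc)

lemma sum_hist_prob: "(\<Sum>h | length h = n. hp h) = 1"
proof (induction n)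
  case 0
  have "{h :: outcome list. length h = 0} = {[]}" by auto
  then show ?case by (simp add: hist_prob_def)
next
  case (Suc n)
  have "(\<Sum>h | length h = Suc n. hp h) = (\<Sum>w\<in>UNIV. rd n w * 1)"
    using sum_round_dist_times_last[of n "\<lambda>_. 1"] by simp
  also have "\<dots> = (\<Sum>h | length h = n. hp h)"
    using sum_round_dist_times[of n "\<lambda>_. 1"] by (simp add: sum_outcome_prob)
  finally show ?case using Suc by simp
qed

lemma sum_round_dist: "(\<Sum>w\<in>UNIV. rd n w) = 1"
  using sum_round_dist_times[of n "\<lambda>_. 1"] by (simp add: sum_outcome_prob sum_hist_prob)

lemma round_dist_le_1: "rd n w \<le> 1"
proof -
  have "rd n CC + rd n CD + rd n DC + rd n DD = 1"
    using sum_round_dist[of n] by (simp add: sum_UNIV_outcome)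
  then show ?thesis
    using round_dist_nonneg[of n CC] round_dist_nonneg[of n CD]
      round_dist_nonneg[of n DC] round_dist_nonneg[of n DD]
    by (cases w) auto
qed

lemma sum_round_dist_Suc_e12: "(\<Sum>w\<in>UNIV. rd (Suc n) w * e12 w) = (\<Sum>w\<in>UNIV. rd n w * p w)"
proof -
  have "(\<Sum>w\<in>UNIV. rd (Suc n) w * e12 w) = (\<Sum>h | length h = Suc n. hp h * x_coop x0 p h)"
    by (simp add: sum_round_dist_times sum_outcome_prob_e12)
  also have "\<dots> = (\<Sum>h | length h = Suc n. hp h * p (last h))"
    by (rule sum.cong) (auto simp: x_coop_def)
  finally show ?thesis by (simp add: sum_round_dist_times_last)
qed

lemma cesaro_nonneg: "0 \<le> ces n w"
  unfolding cesaro_def by (intro divide_nonneg_nonneg sum_nonneg round_dist_nonneg) simp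

lemma cesaro_le_1: "ces n w \<le> 1"
proof -
  have "(\<Sum>k<n. rd k w) \<le> real n"
    using sum_mono[of "{..<n}" "\<lambda>k. rd k w" "\<lambda>_. 1"] round_dist_le_1 by simp
  then show ?thesis unfolding cesaro_def by (cases "n = 0") (simp_all add: divide_le_eq)
qed

lemma sum_cesaro_times:
  "(\<Sum>w\<in>UNIV. ces n w * g w) = (\<Sum>k<n. \<Sum>w\<in>UNIV. rd k w * g w) / real n"
  unfolding cesaro_def by (simp add: sum_divide_distrib sum_distrib_right sum.swap[where A = UNIV])

lemma limit_distribution_exists: "\<exists>v. limit_distribution x0 p q v"
proof -
  define f :: "nat \<Rightarrow> real ^ outcome" where "f n = (\<chi> w. ces n w)" for n
  have "\<forall>n. f n \<in> cbox 0 1"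
    by (simp add: f_def mem_box_cart cesaro_nonneg cesaro_le_1)
  then obtain l r where r: "strict_mono r" and lim: "(f \<circ> r) \<longlonglongrightarrow> l"
    using compact_imp_seq_compact[OF compact_cbox] unfolding seq_compact_def by blast
  have "(\<lambda>k. ces (r k) w) \<longlonglongrightarrow> l $ w" for w
    using tendsto_vec_nth[OF lim, of w] by (simp add: f_def o_def)
  with r show ?thesis unfolding limit_distribution_def by blast
qed

lemma limit_distribution_sum_times:
  assumes "limit_distribution x0 p q v" and "(\<lambda>n. \<Sum>w\<in>UNIV. ces n w * g w) \<longlonglongrightarrow> L"
  shows "(\<Sum>w\<in>UNIV. v w * g w) = L"
proof -
  from assms(1) obtain r where r: "strict_mono r" and lim: "\<And>w. (\<lambda>k. ces (r k) w) \<longlonglongrightarrow> v w"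
    unfolding limit_distribution_def by blast
  have "(\<lambda>k. \<Sum>w\<in>UNIV. ces (r k) w * g w) \<longlonglongrightarrow> (\<Sum>w\<in>UNIV. v w * g w)"
    by (intro tendsto_intros lim)
  moreover have "(\<lambda>k. \<Sum>w\<in>UNIV. ces (r k) w * g w) \<longlonglongrightarrow> L"
    using LIMSEQ_subseq_LIMSEQ[OF assms(2) r] by (simp add: o_def)
  ultimately show ?thesis by (rule LIMSEQ_unique)
qed

lemma limit_distribution_sum_times_const:
  assumes "limit_distribution x0 p q v" and "\<And>k. (\<Sum>w\<in>UNIV. rd k w * g w) = c"
  shows "(\<Sum>w\<in>UNIV. v w * g w) = c"
proof (rule limit_distribution_sum_times[OF assms(1)])
  have "\<forall>\<^sub>F n in sequentially. c = (\<Sum>w\<in>UNIV. ces n w * g w)"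
    using eventually_gt_at_top[of 0] by eventually_elim (simp add: sum_cesaro_times assms(2))
  then show "(\<lambda>n. \<Sum>w\<in>UNIV. ces n w * g w) \<longlonglongrightarrow> c"
    by (rule Lim_transform_eventually[OF tendsto_const])
qed

lemma limit_distribution_telescoping:
  assumes "limit_distribution x0 p q v"
    and step: "\<And>k. (\<Sum>w\<in>UNIV. rd k w * g w) = c (Suc k) - c k"
    and bound: "\<And>k. \<bar>c k\<bar> \<le> B"
  shows "(\<Sum>w\<in>UNIV. v w * g w) = 0"
proof (rule limit_distribution_sum_times[OF assms(1)])
  have "(\<lambda>n. (c n - c 0) * inverse (real n)) \<longlonglongrightarrow> 0"
  proof (rule Lim_null_comparison)
    show "\<forall>\<^sub>F n in sequentially. norm ((c n - c 0) * inverse (real n)) \<le> 2 * B * inverse (real n)"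
    proof (intro always_eventually allI)
      fix n
      have "\<bar>c n - c 0\<bar> \<le> 2 * B" using bound[of n] bound[of 0] by linarith
      then show "norm ((c n - c 0) * inverse (real n)) \<le> 2 * B * inverse (real n)"
        by (simp add: abs_mult mult_right_mono)
    qed
    show "(\<lambda>n. 2 * B * inverse (real n)) \<longlonglongrightarrow> 0"
      by (rule tendsto_mult_right_zero[OF lim_inverse_n])
  qed
  then show "(\<lambda>n. \<Sum>w\<in>UNIV. ces n w * g w) \<longlonglongrightarrow> 0"
    by (simp add: sum_cesaro_times step sum_lessThan_telescope divide_inverse)
qed

lemma limit_distribution_nonneg:
  assumes "limit_distribution x0 p q v" shows "0 \<le> v w"
proof -
  from assms obtain r where "(\<lambda>k. ces (r k) w) \<longlonglongrightarrow> v w"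
    unfolding limit_distribution_def by blast
  then show ?thesis by (rule LIMSEQ_le_const) (simp add: cesaro_nonneg)
qed

lemma limit_distribution_sum:
  assumes "limit_distribution x0 p q v" shows "v CC + v CD + v DC + v DD = 1"
  using limit_distribution_sum_times_const[OF assms, of "\<lambda>_. 1" 1] sum_round_dist
  by (simp add: sum_UNIV_outcome)

lemma limit_distribution_round_dist_const:
  assumes "limit_distribution x0 p q v" and "\<And>k. rd k w = c" shows "v w = c"
  using limit_distribution_sum_times_const[OF assms(1), of "\<lambda>u. of_bool (u = w)" c]
  by (simp add: assms(2))

lemma akin_X:
  assumes "limit_distribution x0 p q v" shows "(\<Sum>w\<in>UNIV. v w * (p w - e12 w)) = 0"
proof (rule limit_distribution_telescoping[OF assms, where c = "\<lambda>k. \<Sum>w\<in>UNIV. rd k w * e12 w"])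
  show "(\<Sum>w\<in>UNIV. rd k w * (p w - e12 w))
          = (\<Sum>w\<in>UNIV. rd (Suc k) w * e12 w) - (\<Sum>w\<in>UNIV. rd k w * e12 w)" for k
    by (simp add: sum_round_dist_Suc_e12 right_diff_distrib sum_subtractf)
  show "\<bar>\<Sum>w\<in>UNIV. rd k w * e12 w\<bar> \<le> 1" for k
    using sum_round_dist[of k] round_dist_nonneg[of k DC] round_dist_nonneg[of k DD]
      round_dist_nonneg[of k CC] round_dist_nonneg[of k CD]
    by (simp add: sum_UNIV_outcome e12_def)
qed

lemma akin_X_outcomes:
  assumes "limit_distribution x0 p q v"
  shows "v CC * (1 - p CC) + v CD * (1 - p CD) = v DC * p DC + v DD * p DD"
  using akin_X[OF assms] by (simp add: sum_UNIV_outcome e12_def right_diff_distrib)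

lemma strictly_firm_limit_distribution:
  assumes "strictly_firm R P p" and "limit_distribution x0 p q v" and "P \<le> payoff v (S_Y R P)"
  shows "v DD = 1"
  using assms x0 strategy_pattern_q unfolding strictly_firm_def by blast

end

locale memory_one_game =
  fixes x0 y0 :: real and p qm :: "outcome \<Rightarrow> real"
  assumes x0_bounds: "0 \<le> x0" "x0 \<le> 1" and y0_bounds: "0 \<le> y0" "y0 \<le> 1"
    and memory_one_p: "memory_one p" and memory_one_qm: "memory_one qm"

sublocale memory_one_game \<subseteq> game x0 p "x_coop y0 qm"
  using x0_bounds y0_bounds memory_one_p memory_one_qm
  by unfold_locales (auto simp: strategy_pattern_def memory_one_def x_coop_def)

context memory_one_game
begin

lemma round_dist_Suc: "rd (Suc k) w = (\<Sum>u\<in>UNIV. rd k u * outcome_prob (p u) (qm u) w)"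
proof -
  have "(\<Sum>u\<in>UNIV. rd k u * outcome_prob (p u) (qm u) w)
      = (\<Sum>h | length h = Suc k. hp h * outcome_prob (p (last h)) (qm (last h)) w)"
    by (rule sum_round_dist_times_last)
  also have "\<dots> = rd (Suc k) w"
    unfolding round_dist_def by (rule sum.cong) (auto simp: x_coop_def)
  finally show ?thesis ..
qed

lemma sum_round_dist_Suc_e13: "(\<Sum>w\<in>UNIV. rd (Suc k) w * e13 w) = (\<Sum>u\<in>UNIV. rd k u * qm u)"
  by (simp add: round_dist_Suc sum_distrib_right sum.swap[where A = UNIV] mult.assoc
      flip: sum_distrib_left add: sum_outcome_prob_e13)

lemma akin_Y:
  assumes "limit_distribution x0 p (x_coop y0 qm) v" shows "(\<Sum>w\<in>UNIV. v w * (qm w - e13 w)) = 0"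
proof (rule limit_distribution_telescoping[OF assms, where c = "\<lambda>k. \<Sum>w\<in>UNIV. rd k w * e13 w"])
  show "(\<Sum>w\<in>UNIV. rd k w * (qm w - e13 w))
          = (\<Sum>w\<in>UNIV. rd (Suc k) w * e13 w) - (\<Sum>w\<in>UNIV. rd k w * e13 w)" for k
    by (simp add: sum_round_dist_Suc_e13 right_diff_distrib sum_subtractf)
  show "\<bar>\<Sum>w\<in>UNIV. rd k w * e13 w\<bar> \<le> 1" for k
    using sum_round_dist[of k] round_dist_nonneg[of k DC] round_dist_nonneg[of k DD]
      round_dist_nonneg[of k CC] round_dist_nonneg[of k CD]
    by (simp add: sum_UNIV_outcome e13_def)
qed

lemma round_dist_absorbing:
  assumes "x0 = e12 w" "y0 = e13 w" "p w = e12 w" "qm w = e13 w"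
  shows "rd k w = 1"
proof (induction k)
  case 0
  have "rd 0 w = outcome_prob x0 y0 w"
    unfolding round_dist_0 by (simp add: x_coop_def)
  then show ?case using assms by (simp add: outcome_prob_e12_e13)
next
  case (Suc k)
  have "1 = rd k w * outcome_prob (p w) (qm w) w"
    using Suc assms(3,4) by (simp add: outcome_prob_e12_e13)
  also have "\<dots> \<le> (\<Sum>u\<in>UNIV. rd k u * outcome_prob (p u) (qm u) w)"
    using memory_one_p memory_one_qm
    by (intro member_le_sum mult_nonneg_nonneg round_dist_nonneg outcome_prob_nonneg)
      (auto simp: memory_one_def)
  also have "\<dots> = rd (Suc k) w"
    by (rule round_dist_Suc[symmetric])
  finally have "1 \<le> rd (Suc k) w" .
  then show ?case using round_dist_le_1[of "Suc k" w] by linarith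
qed

end

lemma akin_balance_bound:
  fixes a b x y K P :: real
  assumes "a * (1 - x) = b * y" and "P * (1 - x) \<le> y * K" and "0 < y" and "0 \<le> a"
  shows "P * b \<le> K * a"
proof -
  have "y * (P * b) = P * (b * y)" by (simp add: ac_simps)
  also have "\<dots> = a * (P * (1 - x))" by (simp add: assms(1)[symmetric] ac_simps)
  also have "\<dots> \<le> a * (y * K)" using assms(2,4) by (rule mult_left_mono)
  also have "\<dots> = y * (K * a)" by (simp add: algebra_simps)
  finally show ?thesis using assms(3) by (rule mult_left_le_imp_le)
qed

lemma strictly_firm_imp_CC_bound:
  assumes "0 < P" and "P < R" and "memory_one p" and "firm p" and "strictly_firm R P p"
  shows "p DC * (R - P) < P * (1 - p CC)"
proof (rule ccontr)
  assume fails: "\<not> ?thesis"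
  interpret memory_one_game 1 1 p "\<lambda>_. 1"
    using assms(3) by unfold_locales (auto simp: memory_one_def)
  obtain v where lim: "limit_distribution 1 p (x_coop 1 (\<lambda>_. 1)) v"
    using limit_distribution_exists by blast
  note v_nonneg = limit_distribution_nonneg[OF lim]
  have "v CD + v DD = 0"
    using akin_Y[OF lim] by (simp add: sum_UNIV_outcome e13_def)
  then have CD: "v CD = 0" and DD: "v DD = 0"
    using v_nonneg[of CD] v_nonneg[of DD] by linarith+
  then have sum: "v CC + v DC = 1" using limit_distribution_sum[OF lim] by simp
  have "P \<le> R * v CC"
  proof (cases "p DC = 0")
    case True
    moreover have "p CC \<le> 1" using assms(3) by (simp add: memory_one_def)
    ultimately have "p CC = 1" using fails assms(1) by (auto simp: zero_less_mult_iff)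
    then have "v CC = 1"
      by (intro limit_distribution_round_dist_const[OF lim] round_dist_absorbing)
        (simp_all add: e12_def e13_def)
    then show ?thesis using assms(2) by simp
  next
    case False
    then have "0 < p DC" using assms(3) by (simp add: memory_one_def less_le)
    have "v CC * (1 - p CC) = v DC * p DC"
      using akin_X_outcomes[OF lim] by (simp add: CD DD)
    then have "P * v DC \<le> (R - P) * v CC"
      by (rule akin_balance_bound[OF _ _ \<open>0 < p DC\<close> v_nonneg[of CC]]) (use fails in linarith)
    moreover have "P * v CC + P * v DC = P"
      using sum by (metis distrib_left mult_1_right)
    ultimately show ?thesis using left_diff_distrib[of R P "v CC"] by linarith
  qed
  then have "v DD = 1"
    using strictly_firm_limit_distribution[OF assms(5) lim] CD DD
    by (simp add: payoff_S_Y mult.commute)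
  with DD show False by simp
qed

lemma strictly_firm_imp_CD_bound:
  assumes "0 < P" and "P < 1" and "memory_one p" and "firm p" and "strictly_firm R P p"
  shows "p DC * (1 - P) < P * (1 - p CD)"
proof (rule ccontr)
  assume fails: "\<not> ?thesis"
  define coop_after_DD :: "outcome \<Rightarrow> real" where "coop_after_DD u = of_bool (u = DD)" for u
  interpret memory_one_game 1 0 p coop_after_DD
    using assms(3) by unfold_locales (auto simp: memory_one_def coop_after_DD_def)
  obtain v where lim: "limit_distribution 1 p (x_coop 0 coop_after_DD) v"
    using limit_distribution_exists by blast
  note v_nonneg = limit_distribution_nonneg[OF lim]
  have "rd k CC = 0" for k
  proof (cases k)
    case 0
    then show ?thesis by (simp add: round_dist_0 x_coop_def outcome_prob_def)
  next
    case (Suc j)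
    then show ?thesis
      using assms(4)
      by (simp add: round_dist_Suc sum_UNIV_outcome outcome_prob_def coop_after_DD_def firm_def)
  qed
  then have CC: "v CC = 0" by (rule limit_distribution_round_dist_const[OF lim])
  have DD: "v DD = v DC"
    using akin_Y[OF lim] CC by (simp add: sum_UNIV_outcome e13_def coop_after_DD_def)
  have sum: "v CD + 2 * v DC = 1" using limit_distribution_sum[OF lim] CC DD by simp
  have "P \<le> v CD + P * v DC"
  proof (cases "p DC = 0")
    case True
    moreover have "p CD \<le> 1" using assms(3) by (simp add: memory_one_def)
    ultimately have "p CD = 1" using fails assms(1) by (auto simp: zero_less_mult_iff)
    then have "v CD = 1"
      by (intro limit_distribution_round_dist_const[OF lim] round_dist_absorbing)
        (simp_all add: e12_def e13_def coop_after_DD_def)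
    moreover have "0 \<le> P * v DC" using assms(1) v_nonneg[of DC] by simp
    ultimately show ?thesis using assms(2) by simp
  next
    case False
    then have "0 < p DC" using assms(3) by (simp add: memory_one_def less_le)
    have "v CD * (1 - p CD) = v DC * p DC"
      using akin_X_outcomes[OF lim] assms(4) by (simp add: CC DD firm_def)
    then have "P * v DC \<le> (1 - P) * v CD"
      by (rule akin_balance_bound[OF _ _ \<open>0 < p DC\<close> v_nonneg[of CD]]) (use fails in linarith)
    moreover have "P * v CD + 2 * (P * v DC) = P"
      using sum by (metis distrib_left mult_1_right mult.left_commute)
    ultimately show ?thesis using left_diff_distrib[of 1 P "v CD"] by linarith
  qed
  then have "v DD = 1"
    using strictly_firm_limit_distribution[OF assms(5) lim] CC DD
    by (simp add: payoff_S_Y mult.commute)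
  with DD sum v_nonneg[of CD] show False by linarith
qed

lemma mutual_defection_of_payoff_ge:
  fixes v1 v2 v3 v4 p1 p2 p3 P R :: real
  assumes "0 < P" and "0 \<le> v1" "0 \<le> v2" "0 \<le> v3" and sum: "v1 + v2 + v3 + v4 = 1"
    and akin: "v1 * (1 - p1) + v2 * (1 - p2) = v3 * p3" and "0 \<le> p3"
    and CC_bound: "p3 * (R - P) < P * (1 - p1)" and CD_bound: "p3 * (1 - P) < P * (1 - p2)"
    and payoff: "P \<le> v1 * R + v2 + v4 * P"
  shows "v4 = 1"
proof -
  have "P * v1 + P * v2 + P * v3 + v4 * P = P"
    using sum by (simp flip: distrib_left add: mult.commute)
  then have gain: "P * v3 \<le> (R - P) * v1 + (1 - P) * v2"
    using payoff by (simp add: algebra_simps)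
  have "v1 * (P * (1 - p1) - p3 * (R - P)) + v2 * (P * (1 - p2) - p3 * (1 - P))
          = P * (v1 * (1 - p1) + v2 * (1 - p2)) - p3 * ((R - P) * v1 + (1 - P) * v2)"
    by (simp add: algebra_simps)
  also have "\<dots> = p3 * (P * v3) - p3 * ((R - P) * v1 + (1 - P) * v2)"
    by (simp add: akin ac_simps)
  also have "\<dots> \<le> 0" using mult_left_mono[OF gain \<open>0 \<le> p3\<close>] by simp
  finally have "v1 * (P * (1 - p1) - p3 * (R - P)) + v2 * (P * (1 - p2) - p3 * (1 - P)) \<le> 0" .
  moreover have CC_slack: "0 < P * (1 - p1) - p3 * (R - P)"
    and CD_slack: "0 < P * (1 - p2) - p3 * (1 - P)"
    using CC_bound CD_bound by linarith+
  moreover have "0 \<le> v1 * (P * (1 - p1) - p3 * (R - P))" "0 \<le> v2 * (P * (1 - p2) - p3 * (1 - P))"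
    using CC_slack CD_slack assms(2,3) by simp_all
  ultimately have "v1 * (P * (1 - p1) - p3 * (R - P)) = 0" "v2 * (P * (1 - p2) - p3 * (1 - P)) = 0"
    by linarith+
  then have "v1 = 0" "v2 = 0" using CC_slack CD_slack by simp_all
  then have "v3 = 0" using gain assms(1,4) by (simp add: mult_le_0_iff)
  with \<open>v1 = 0\<close> \<open>v2 = 0\<close> show ?thesis using sum by simp
qed

lemma CC_CD_bounds_imp_strictly_firm:
  assumes "0 < P" and "memory_one p" and "firm p"
    and "p DC * (R - P) < P * (1 - p CC)" and "p DC * (1 - P) < P * (1 - p CD)"
  shows "strictly_firm R P p"
  unfolding strictly_firm_def
proof (intro conjI allI impI)
  fix x0 q v
  assume "0 \<le> x0 \<and> x0 \<le> 1" "strategy_pattern q" and lim: "limit_distribution x0 p q v"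
    and payoff: "P \<le> payoff v (S_Y R P)"
  then interpret game x0 p q using assms(2) by unfold_locales auto
  have akin: "v CC * (1 - p CC) + v CD * (1 - p CD) = v DC * p DC"
    using akin_X_outcomes[OF lim] assms(3) by (simp add: firm_def)
  have "0 \<le> p DC" using assms(2) by (simp add: memory_one_def)
  from mutual_defection_of_payoff_ge[OF assms(1) limit_distribution_nonneg[OF lim]
      limit_distribution_nonneg[OF lim] limit_distribution_nonneg[OF lim]
      limit_distribution_sum[OF lim] akin this assms(4,5)]
  show "v DD = 1" using payoff by (simp add: payoff_S_Y)
qed (fact assms(3))

lemma strictly_firm_iff:
  assumes "0 < P" and "P < R" and "R < 1" and "memory_one p" and "firm p"
  shows "strictly_firm R P p \<longleftrightarrow> p DC * (R - P) < P * (1 - p CC) \<and> p DC * (1 - P) < P * (1 - p CD)"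
  using strictly_firm_imp_CC_bound[OF assms(1,2,4,5)] strictly_firm_imp_CD_bound[OF assms(1) _ assms(4,5)]
    CC_CD_bounds_imp_strictly_firm[OF assms(1,4,5)] assms(2,3) by fastforce

lemma press_dyson_bounds:
  assumes pd: "\<forall>w. p w - e12 w = \<alpha> * S_X R P w + \<beta> * S_Y R P w + \<gamma> + \<delta> * e23 w"
    and "p DD = 0"
  shows "p DC * (R - P) - P * (1 - p CC) = (\<alpha> + \<delta>) * (R - P)"
    and "p DC * (1 - P) - P * (1 - p CD) = (1 - 2 * P) * \<alpha> + \<delta>"
proof -
  have CC: "p CC = 1 + \<alpha> * R + \<beta> * R + \<gamma>" and CD: "p CD = 1 + \<beta> + \<gamma> + \<delta>"
    and DC: "p DC = \<alpha> + \<gamma> + \<delta>" and DD: "\<gamma> = - (\<alpha> * P + \<beta> * P)"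
    using pd[rule_format, of CC] pd[rule_format, of CD] pd[rule_format, of DC] pd[rule_format, of DD]
      \<open>p DD = 0\<close>
    by (simp_all add: S_X_def S_Y_def e12_def e23_def)
  show "p DC * (R - P) - P * (1 - p CC) = (\<alpha> + \<delta>) * (R - P)"
    unfolding CC DC DD by (simp add: algebra_simps)
  show "p DC * (1 - P) - P * (1 - p CD) = (1 - 2 * P) * \<alpha> + \<delta>"
    unfolding CD DC DD by (simp add: algebra_simps)
qed

theorem theorem5p3:
  fixes R P :: real and p :: "outcome \<Rightarrow> real"
  assumes "0 < P" and "P < R" and "R < 1" and "2 * R > 1"
    and "memory_one p" and "firm p"
  shows "(strictly_firm R P p \<longleftrightarrow>
            p DC < P / (R - P) * (1 - p CC) \<and> p DC < P / (1 - P) * (1 - p CD))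
       \<and> (\<forall>\<alpha> \<beta> \<gamma> \<delta> :: real.
            (\<forall>w. p w - e12 w = \<alpha> * S_X R P w + \<beta> * S_Y R P w + \<gamma> + \<delta> * e23 w) \<longrightarrow>
            (strictly_firm R P p \<longleftrightarrow> - \<delta> > max \<alpha> ((1 - 2 * P) * \<alpha>)))"
proof (intro conjI allI impI)
  have "R - P > 0" "1 - P > 0" using assms(2,3) by simp_all
  then show "strictly_firm R P p \<longleftrightarrow>
      p DC < P / (R - P) * (1 - p CC) \<and> p DC < P / (1 - P) * (1 - p CD)"
    using strictly_firm_iff[OF assms(1-3,5,6)] by (simp add: pos_less_divide_eq mult.commute)
next
  fix \<alpha> \<beta> \<gamma> \<delta> :: real
  assume "\<forall>w. p w - e12 w = \<alpha> * S_X R P w + \<beta> * S_Y R P w + \<gamma> + \<delta> * e23 w"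
  note bounds = press_dyson_bounds[OF this assms(6)[unfolded firm_def]]
  have "p DC * (R - P) < P * (1 - p CC) \<longleftrightarrow> (\<alpha> + \<delta>) * (R - P) < 0"
    using bounds(1) by linarith
  also have "\<dots> \<longleftrightarrow> \<alpha> + \<delta> < 0"
    using assms(2) by (simp add: mult_less_0_iff)
  finally have "p DC * (R - P) < P * (1 - p CC) \<longleftrightarrow> \<alpha> < - \<delta>" by linarith
  moreover have "p DC * (1 - P) < P * (1 - p CD) \<longleftrightarrow> (1 - 2 * P) * \<alpha> < - \<delta>"
    using bounds(2) by linarith
  ultimately show "strictly_firm R P p \<longleftrightarrow> - \<delta> > max \<alpha> ((1 - 2 * P) * \<alpha>)"
    using strictly_firm_iff[OF assms(1-3,5,6)] by (simp only: max_less_iff_conj)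
qed

end
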